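(* A Tychonoff space $X$ is a nowhere almost $P$-space if and only if no non-isolated point of $X$ is an almost $P$-point.
   Context: $C(X)$ is the ring of real-valued continuous functions on $X$; a zero set is $Z(h)=\{x: h(x)=0\}$ with $h\in C(X)$ and a cozero set is its complement. $T''(X)$ is the set of all functions $f\colon X\to\mathbb{R}$ for which there is a dense cozero set $U$ of $X$ with $f|_U$ continuous. $\chi_A$ is the characteristic function of $A\subseteq X$. $X$ is a nowhere almost $P$-space if $\chi_{\{p\}}\in T''(X)$ for all $p\in X$. A point $p\in X$ is an almost $P$-point if every non-empty $G_\delta$-set (equivalently, for Tychonoff $X$, every zero set) containing $p$ has non-empty interior. *)

theory Defs
  imports "HOL-Analysis.Analysis"
begin

definition tychonoff_space :: "'a topology \<Rightarrow> bool" where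
  "tychonoff_space X \<longleftrightarrow> completely_regular_space X \<and> Hausdorff_space X"

definition zero_set :: "'a topology \<Rightarrow> ('a \<Rightarrow> real) \<Rightarrow> 'a set" where
  "zero_set X h = {x \<in> topspace X. h x = 0}"

definition cozero_set :: "'a topology \<Rightarrow> ('a \<Rightarrow> real) \<Rightarrow> 'a set" where
  "cozero_set X h = topspace X - zero_set X h"

definition T2prime :: "'a topology \<Rightarrow> ('a \<Rightarrow> real) set" where
  "T2prime X = {f. \<exists>h. continuous_map X euclideanreal h \<and>
                     X closure_of (cozero_set X h) = topspace X \<and>
                     continuous_map (subtopology X (cozero_set X h)) euclideanreal f}"

definition nowhere_almost_P_space :: "'a topology \<Rightarrow> bool" where
  "nowhere_almost_P_space X \<longleftrightarrow> (\<forall>p \<in> topspace X. indicator {p} \<in> T2prime X)"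

definition almost_P_point :: "'a topology \<Rightarrow> 'a \<Rightarrow> bool" where
  "almost_P_point X p \<longleftrightarrow>
     (\<forall>G. gdelta_in X G \<and> p \<in> G \<longrightarrow> X interior_of G \<noteq> {})"

definition isolated_point_of :: "'a topology \<Rightarrow> 'a \<Rightarrow> bool" where
  "isolated_point_of X p \<longleftrightarrow> p \<in> topspace X \<and> openin X {p}"

end

theory Submission
  imports Defs
begin

(* If chi_{p} is continuous on an open set U containing p, then {p} is open in U and hence
   in X. So for a non-isolated p, chi_{p} lies in T''(X) exactly when p lies in a zero set Z(h)
   with empty interior, i.e. outside the dense cozero set X - Z(h), on which chi_{p} vanishes.
   Zero sets are G_delta, and conversely, in a completely regular space, a G_delta set
   containing p contains a zero set containing p: if G is the intersection of open sets C_n,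
   take Urysohn functions f_n with f_n p = 0 and f_n = 1 off C_n, and h = sum_n f_n / 2^n.
   So the condition says precisely that p is not an almost P-point. At an isolated point of
   a T1 space chi_{p} is continuous everywhere. *)

lemma gdelta_in_continuous_map_preimage:
  assumes f: "continuous_map X Y f" and S: "gdelta_in Y S"
  shows "gdelta_in X {x \<in> topspace X. f x \<in> S}"
proof -
  obtain C where C: "\<And>n::nat. openin Y (C n)" and S_eq: "\<Inter> (range C) = S"
    using S unfolding gdelta_in_descending by blast
  have "{x \<in> topspace X. f x \<in> S} = (\<Inter>n. {x \<in> topspace X. f x \<in> C n})"
    using S_eq by blast
  moreover have "gdelta_in X (\<Inter>n. {x \<in> topspace X. f x \<in> C n})"
    using openin_continuous_map_preimage[OF f C]
    by (intro gdelta_in_Inter open_imp_gdelta_in) auto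
  ultimately show ?thesis
    by simp
qed

lemma gdelta_in_zero_set:
  assumes "continuous_map X euclideanreal h"
  shows "gdelta_in X (zero_set X h)"
proof -
  have "gdelta_in euclideanreal {0}"
    by (simp add: closed_imp_gdelta_in metrizable_space_euclidean)
  then show ?thesis
    using gdelta_in_continuous_map_preimage[OF assms, of "{0}"] by (simp add: zero_set_def)
qed

lemma openin_cozero_set:
  assumes "continuous_map X euclideanreal h"
  shows "openin X (cozero_set X h)"
proof -
  have "cozero_set X h = {x \<in> topspace X. h x \<in> - {0}}"
    by (auto simp: cozero_set_def zero_set_def)
  then show ?thesis
    using openin_continuous_map_preimage[OF assms, of "- {0}"] by (simp add: open_Compl)
qed

lemma closure_of_cozero_set_eq_topspace:
  "X closure_of cozero_set X h = topspace X \<longleftrightarrow> X interior_of zero_set X h = {}"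
  using interior_of_subset_topspace[of X "zero_set X h"]
  by (auto simp: cozero_set_def closure_of_complement)

lemma continuous_map_indicator_clopen:
  assumes "openin X S" "closedin X S"
  shows "continuous_map X euclideanreal (indicator S)"
proof -
  have "{x \<in> topspace X. indicator S x \<in> U} =
        (if (1::real) \<in> U then S else {}) \<union> (if (0::real) \<in> U then topspace X - S else {})" for U
    using closedin_subset[OF assms(2)] by (auto simp: indicator_def)
  then show ?thesis
    using assms by (auto simp: continuous_map_def)
qed

lemma continuous_map_suminf:
  fixes f :: "nat \<Rightarrow> 'a \<Rightarrow> real"
  assumes f: "\<And>n. continuous_map X euclideanreal (f n)"
    and bound: "\<And>n x. x \<in> topspace X \<Longrightarrow> \<bar>f n x\<bar> \<le> M n" and M: "summable M"
  shows "continuous_map X euclideanreal (\<lambda>x. \<Sum>n. f n x)"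
proof -
  have lim: "uniform_limit (topspace X) (\<lambda>n x. \<Sum>i<n. f i x) (\<lambda>x. \<Sum>n. f n x) sequentially"
    using bound by (intro Weierstrass_m_test[OF _ M]) auto
  have "continuous_map X Met_TC.mtopology (\<lambda>x. \<Sum>n. f n x)"
  proof (rule Met_TC.continuous_map_uniform_limit[where F = sequentially])
    show "\<forall>\<^sub>F n in sequentially. continuous_map X Met_TC.mtopology (\<lambda>x. \<Sum>i<n. f i x)"
      by (auto intro!: always_eventually continuous_intros f)
    show "\<forall>\<^sub>F n in sequentially. \<forall>x\<in>topspace X. (\<Sum>n. f n x) \<in> UNIV \<and>
            dist (\<Sum>i<n. f i x) (\<Sum>n. f n x) < e" if "e > 0" for e
      using uniform_limitD[OF lim that] by (simp add: dist_commute)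
  qed auto
  then show ?thesis
    by simp
qed

lemma completely_regular_space_zero_set_in_gdelta:
  assumes X: "completely_regular_space X" and G: "gdelta_in X G" and "p \<in> G"
  obtains h where "continuous_map X euclideanreal h" "p \<in> zero_set X h" "zero_set X h \<subseteq> G"
proof -
  obtain C where C: "\<And>n::nat. openin X (C n)" and G_eq: "\<Inter> (range C) = G"
    using G gdelta_in_descending by meson
  have separate: "\<exists>f. continuous_map X (top_of_set {0..1}) f \<and> f x = 0 \<and> f ` S \<subseteq> {1::real}"
    if "closedin X S" "x \<in> topspace X - S" for S x
    using X that unfolding completely_regular_space_gen[OF zero_less_one] by blast
  have "\<exists>f. continuous_map X (top_of_set {0..1}) f \<and> f p = 0 \<and> f ` (topspace X - C n) \<subseteq> {1::real}" for n
    using separate[of "topspace X - C n" p] C[of n] G_eq \<open>p \<in> G\<close> openin_subset[OF C[of n]] by blast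
  then obtain f where f: "\<And>n. continuous_map X (top_of_set {0..1}) (f n)"
    and f_p: "\<And>n. f n p = 0" and f_out: "\<And>n. f n ` (topspace X - C n) \<subseteq> {1::real}"
    by metis
  have f_cont: "continuous_map X euclideanreal (f n)" for n
    using f continuous_map_in_subtopology by blast
  have f_01: "x \<in> topspace X \<Longrightarrow> 0 \<le> f n x \<and> f n x \<le> 1" for n x
    using f[of n] by (auto simp: continuous_map_def)
  define h where "h x = (\<Sum>n. f n x / 2 ^ n)" for x
  have bound: "x \<in> topspace X \<Longrightarrow> \<bar>f n x / 2 ^ n\<bar> \<le> (1/2) ^ n" for n x
    using f_01[of x n] by (simp add: power_divide divide_right_mono)
  have summable: "x \<in> topspace X \<Longrightarrow> summable (\<lambda>n. f n x / 2 ^ n)" for x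
    using bound by (intro summable_comparison_test'[OF summable_geometric[of "1/2"]]) auto
  show thesis
  proof
    show "continuous_map X euclideanreal h"
      unfolding h_def using bound
      by (intro continuous_map_suminf[OF _ _ summable_geometric[of "1/2"]]) (auto intro: continuous_intros f_cont)
    show "p \<in> zero_set X h"
      using \<open>p \<in> G\<close> G gdelta_in_subset by (fastforce simp: zero_set_def h_def f_p)
    show "zero_set X h \<subseteq> G"
    proof
      fix x assume x: "x \<in> zero_set X h"
      then have "f n x / 2 ^ n = 0" for n
        using suminf_eq_zero_iff[OF summable] f_01 by (auto simp: zero_set_def h_def)
      then have "x \<in> C n" for n
        using f_out[of n] x by (fastforce simp: zero_set_def)
      then show "x \<in> G"
        using G_eq by blast
    qed
  qed
qed

lemma not_almost_P_point_iff_nowhere_dense_zero_set: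
  assumes "completely_regular_space X"
  shows "\<not> almost_P_point X p \<longleftrightarrow>
           (\<exists>h. continuous_map X euclideanreal h \<and> p \<in> zero_set X h \<and> X interior_of zero_set X h = {})"
proof
  assume "\<not> almost_P_point X p"
  then obtain G where G: "gdelta_in X G" "p \<in> G" "X interior_of G = {}"
    unfolding almost_P_point_def by blast
  obtain h where "continuous_map X euclideanreal h" "p \<in> zero_set X h" "zero_set X h \<subseteq> G"
    using completely_regular_space_zero_set_in_gdelta[OF assms G(1,2)] .
  moreover have "X interior_of zero_set X h = {}"
    using interior_of_mono[OF \<open>zero_set X h \<subseteq> G\<close>] G(3) by blast
  ultimately show "\<exists>h. continuous_map X euclideanreal h \<and> p \<in> zero_set X h \<and> X interior_of zero_set X h = {}"
    by blast
next
  assume "\<exists>h. continuous_map X euclideanreal h \<and> p \<in> zero_set X h \<and> X interior_of zero_set X h = {}"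
  then show "\<not> almost_P_point X p"
    unfolding almost_P_point_def by (blast intro: gdelta_in_zero_set)
qed

lemma openin_singleton_if_continuous_indicator:
  assumes U: "openin X U" "p \<in> U" and f: "continuous_map (subtopology X U) euclideanreal (indicator {p})"
  shows "openin X {p}"
proof -
  have "{x \<in> topspace (subtopology X U). indicator {p} x \<in> {1/2::real<..}} = {p}"
    using U(2) openin_subset[OF U(1)] by (auto simp: indicator_def)
  then have "openin (subtopology X U) {p}"
    using openin_continuous_map_preimage[OF f, of "{1/2<..}"] by simp
  then show ?thesis
    using openin_trans_full U(1) by metis
qed

lemma indicator_singleton_in_T2prime_iff_nowhere_dense_zero_set:
  assumes "p \<in> topspace X" "\<not> openin X {p}"
  shows "indicator {p} \<in> T2prime X \<longleftrightarrow>
           (\<exists>h. continuous_map X euclideanreal h \<and> p \<in> zero_set X h \<and> X interior_of zero_set X h = {})"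
proof
  assume "indicator {p} \<in> T2prime X"
  then obtain h where h: "continuous_map X euclideanreal h"
    and dense: "X closure_of cozero_set X h = topspace X"
    and cont: "continuous_map (subtopology X (cozero_set X h)) euclideanreal (indicator {p})"
    unfolding T2prime_def by blast
  have "p \<notin> cozero_set X h"
    using openin_singleton_if_continuous_indicator[OF openin_cozero_set[OF h] _ cont] assms(2)
    by metis
  then have "p \<in> zero_set X h"
    using assms(1) by (simp add: cozero_set_def)
  moreover have "X interior_of zero_set X h = {}"
    using dense by (simp add: closure_of_cozero_set_eq_topspace)
  ultimately show "\<exists>h. continuous_map X euclideanreal h \<and> p \<in> zero_set X h \<and> X interior_of zero_set X h = {}"
    using h by blast
next
  assume "\<exists>h. continuous_map X euclideanreal h \<and> p \<in> zero_set X h \<and> X interior_of zero_set X h = {}"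
  then obtain h where h: "continuous_map X euclideanreal h" "p \<in> zero_set X h"
    and nowhere_dense: "X interior_of zero_set X h = {}"
    by blast
  have "continuous_map (subtopology X (cozero_set X h)) euclideanreal (indicator {p})"
  proof (rule continuous_map_eq[of _ _ "\<lambda>_. 0"])
    show "0 = indicator {p} x" if "x \<in> topspace (subtopology X (cozero_set X h))" for x
      using that h(2) by (cases "x = p") (auto simp: cozero_set_def)
  qed simp
  moreover have "X closure_of cozero_set X h = topspace X"
    using nowhere_dense by (simp add: closure_of_cozero_set_eq_topspace)
  ultimately show "indicator {p} \<in> T2prime X"
    unfolding T2prime_def using h(1) by blast
qed

lemma isolated_point_indicator_in_T2prime:
  assumes "t1_space X" "isolated_point_of X p"
  shows "indicator {p} \<in> T2prime X"
proof -
  have "cozero_set X (\<lambda>_. 1) = topspace X"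
    by (simp add: cozero_set_def zero_set_def)
  moreover have "continuous_map X euclideanreal (indicator {p})"
    using assms by (auto simp: isolated_point_of_def t1_space_closedin_singleton intro: continuous_map_indicator_clopen)
  ultimately show ?thesis
    unfolding T2prime_def by (force intro!: exI[of _ "\<lambda>_. 1"])
qed

theorem theorem4p0:
  fixes X :: "'a topology"
  assumes "tychonoff_space X"
  shows "nowhere_almost_P_space X \<longleftrightarrow>
           (\<forall>p \<in> topspace X. \<not> isolated_point_of X p \<longrightarrow> \<not> almost_P_point X p)"
proof -
  have X: "completely_regular_space X" "t1_space X"
    using assms by (auto simp: tychonoff_space_def Hausdorff_imp_t1_space)
  have "indicator {p} \<in> T2prime X \<longleftrightarrow> isolated_point_of X p \<or> \<not> almost_P_point X p"
    if "p \<in> topspace X" for p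
  proof (cases "isolated_point_of X p")
    case True
    then show ?thesis
      using isolated_point_indicator_in_T2prime[OF X(2)] by blast
  next
    case False
    with that show ?thesis
      by (simp add: isolated_point_of_def indicator_singleton_in_T2prime_iff_nowhere_dense_zero_set
          not_almost_P_point_iff_nowhere_dense_zero_set[OF X(1)])
  qed
  then show ?thesis
    unfolding nowhere_almost_P_space_def by blast
qed

end
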